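(* Let $x_1,\dots,x_n$ be independent random variables in $[0,1]$ with $\mathbb{E}[x_i]\le\nu$ for all $i$, for some $\nu\in[0,1]$. For any $c\ge1$ with $c\nu<1$ and any $\lambda\in\big[0,\frac{\ln c}{(1-c\nu)(4n-3)}\big]$, $$\mathbb{E}\exp\big(\lambda(x_1+\dots+x_n)^2\big)\le\exp\big(\lambda cn\nu(1+cn\nu)\big).$$ *)

theory Defs
  imports "HOL-Probability.Probability"
begin

end

theory Submission
  imports Defs
begin

text \<open>Let \<open>S\<^sub>k\<close> be the \<open>k\<close>-th partial sum and \<open>q = c \<nu>\<close>. Consider the potential
  \<open>Q\<^sub>k = E exp (l S\<^sub>k\<^sup>2 + 2 q l (n - k) S\<^sub>k)\<close>, so that \<open>Q\<^sub>0 = 1\<close> and \<open>Q\<^sub>n\<close> is the quantity to bound.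
  Passing from \<open>S\<^sub>k\<close> to \<open>S\<^sub>k + x\<^sub>k\<close>, convexity of \<open>exp\<close> makes the integrand affine in \<open>x\<^sub>k\<close>, so by
  independence \<open>x\<^sub>k\<close> may be replaced by its mean; the new factor becomes the moment generating function
  \<open>1 + \<nu> (e\<^sup>T - 1)\<close> of a Bernoulli(\<nu>) variable at \<open>T = 2 l S\<^sub>k + l + 2 q l (n - k - 1)\<close>, which is at most \<open>exp (q T)\<close>
  while \<open>T \<le> ln c / (1 - q)\<close>. The surplus \<open>2 q l S\<^sub>k\<close> is exactly the growth of the linear coefficient of
  the potential from \<open>k + 1\<close> to \<open>k\<close>, so \<open>Q\<^sub>k\<^sub>+\<^sub>1 \<le> Q\<^sub>k exp (q (l + 2 q l (n - k - 1)))\<close>, and the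
  product of these factors is \<open>exp (q l n (1 + q (n - 1)))\<close>. This needs only \<open>l (2 n - 1) \<le> ln c / (1 - q)\<close>.\<close>

lemma exp_scaled_le_chord:
  fixes x T :: real
  assumes "0 \<le> x" "x \<le> 1"
  shows "exp (x * T) \<le> 1 + x * (exp T - 1)"
proof -
  have "exp ((1 - x) *\<^sub>R 0 + x *\<^sub>R T) \<le> (1 - x) * exp 0 + x * exp T"
    using assms by (intro convex_onD[OF exp_convex]) auto
  thus ?thesis by (simp add: algebra_simps)
qed

text \<open>With \<open>q = c \<nu>\<close>, the difference \<open>exp (q s) - \<nu> exp s\<close> is nondecreasing on \<open>[0, t]\<close>: its
  derivative is nonnegative as long as \<open>\<nu> exp ((1 - q) s) \<le> q\<close>, i.e. \<open>(1 - q) s \<le> ln c\<close>.\<close>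

lemma bernoulli_mgf_le_exp_scaled:
  fixes \<nu> c t :: real
  assumes "0 \<le> \<nu>" "1 \<le> c" "c * \<nu> < 1" "0 \<le> t" "t \<le> ln c / (1 - c * \<nu>)"
  shows "1 + \<nu> * (exp t - 1) \<le> exp (c * \<nu> * t)"
proof -
  define q where "q = c * \<nu>"
  have q: "0 \<le> q" "q < 1" using assms by (auto simp: q_def)
  define F where "F = (\<lambda>s. exp (q * s) - \<nu> * exp s)"
  have "F 0 \<le> F t"
  proof (rule DERIV_nonneg_imp_increasing_open[of 0 t F])
    show "0 \<le> t" by fact
    show "continuous_on {0..t} F" unfolding F_def by (intro continuous_intros)
    fix s assume s: "0 < s" "s < t"
    have D: "(F has_real_derivative (q * exp (q * s) - \<nu> * exp s)) (at s)"
      unfolding F_def by (auto intro!: derivative_eq_intros)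
    have "(1 - q) * s \<le> (1 - q) * t" using s q by (intro mult_left_mono) auto
    also have "\<dots> \<le> ln c" using assms(5) q by (simp add: q_def field_simps)
    finally have "exp ((1 - q) * s) \<le> c"
      using assms(2) by (metis exp_le_cancel_iff exp_ln less_le_trans zero_less_one)
    hence "\<nu> * exp ((1 - q) * s) * exp (q * s) \<le> q * exp (q * s)"
      using assms(1) by (intro mult_right_mono) (auto simp: q_def mult_left_mono mult.commute)
    moreover have "exp ((1 - q) * s) * exp (q * s) = exp s"
      by (simp add: exp_add[symmetric] algebra_simps)
    ultimately have "0 \<le> q * exp (q * s) - \<nu> * exp s" by (simp add: mult.assoc)
    with D show "\<exists>y. DERIV F s :> y \<and> 0 \<le> y" by blast
  qed
  thus ?thesis by (simp add: F_def q_def algebra_simps)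
qed

lemma exp_quadratic_shift_le:
  fixes l b s y :: real
  assumes "0 \<le> l" "0 \<le> y" "y \<le> 1"
  shows "exp (l * (s + y)^2 + b * (s + y))
           \<le> exp (l * s^2 + b * s) * (1 + y * (exp (2 * l * s + l + b) - 1))"
proof -
  have "l * y^2 \<le> l * y"
    using assms by (intro mult_left_mono) (auto simp: power2_eq_square mult_left_le)
  hence "l * (s + y)^2 + b * (s + y) \<le> (l * s^2 + b * s) + y * (2 * l * s + l + b)"
    by (simp add: power2_eq_square algebra_simps)
  hence "exp (l * (s + y)^2 + b * (s + y)) \<le> exp (l * s^2 + b * s) * exp (y * (2 * l * s + l + b))"
    by (simp add: exp_add[symmetric])
  also have "\<dots> \<le> exp (l * s^2 + b * s) * (1 + y * (exp (2 * l * s + l + b) - 1))"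
    using assms by (intro mult_left_mono exp_scaled_le_chord) auto
  finally show ?thesis .
qed

lemma le_exp_of_increments:
  fixes Q E :: "nat \<Rightarrow> real"
  assumes "Q 0 \<le> exp (E 0)"
    and "\<And>k. k < n \<Longrightarrow> Q (Suc k) \<le> Q k * exp (E (Suc k) - E k)"
  shows "Q n \<le> exp (E n)"
proof -
  have "Q k \<le> exp (E k)" if "k \<le> n" for k
    using that
  proof (induction k)
    case 0
    show ?case by fact
  next
    case (Suc k)
    hence "Q (Suc k) \<le> Q k * exp (E (Suc k) - E k)" by (intro assms(2)) simp
    also have "\<dots> \<le> exp (E k) * exp (E (Suc k) - E k)"
      using Suc by (intro mult_right_mono) auto
    finally show ?case by (simp add: exp_add[symmetric])
  qed
  thus ?thesis by simp
qed

lemma (in finite_measure) integrable_continuous_comp_bounded: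
  fixes f :: "real \<Rightarrow> real"
  assumes "continuous_on UNIV f" "compact K"
    and "Y \<in> borel_measurable M" "\<And>\<omega>. \<omega> \<in> space M \<Longrightarrow> Y \<omega> \<in> K"
  shows "integrable M (\<lambda>\<omega>. f (Y \<omega>))"
proof -
  have "compact (f ` K)"
    using assms(1,2) continuous_on_subset by (blast intro: compact_continuous_image)
  then obtain B where B: "\<And>y. y \<in> f ` K \<Longrightarrow> norm y \<le> B"
    using compact_imp_bounded bounded_iff by metis
  show ?thesis
  proof (rule integrable_const_bound[where B=B])
    show "AE \<omega> in M. norm (f (Y \<omega>)) \<le> B" using B assms(4) by (auto intro!: AE_I2)
    show "(\<lambda>\<omega>. f (Y \<omega>)) \<in> borel_measurable M"
      using measurable_compose[OF assms(3) borel_measurable_continuous_onI[OF assms(1)]] by simp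
  qed
qed

lemma (in prob_space) expectation_indep_mult_le:
  fixes X Z :: "'a \<Rightarrow> real"
  assumes "indep_var borel X borel Z" "integrable M X" "integrable M Z"
    and "expectation X \<le> \<nu>" "AE \<omega> in M. 0 \<le> Z \<omega>"
  shows "expectation (\<lambda>\<omega>. X \<omega> * Z \<omega>) \<le> \<nu> * expectation Z"
proof -
  have "0 \<le> expectation Z" using assms(5) by (rule integral_nonneg_AE)
  with assms show ?thesis
    by (simp add: indep_var_lebesgue_integral mult_right_mono)
qed

lemma (in prob_space) expectation_exp_quadratic_shift_le:
  fixes X Y :: "'a \<Rightarrow> real" and K \<nu> l b :: real
  assumes indep: "indep_var borel X borel Y"
    and X: "X \<in> borel_measurable M" "\<And>\<omega>. \<omega> \<in> space M \<Longrightarrow> X \<omega> \<in> {0..1}"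
    and EX: "expectation X \<le> \<nu>"
    and Y: "Y \<in> borel_measurable M" "\<And>\<omega>. \<omega> \<in> space M \<Longrightarrow> Y \<omega> \<in> {0..K}"
    and lb: "0 \<le> l" "0 \<le> b"
  shows "expectation (\<lambda>\<omega>. exp (l * (Y \<omega> + X \<omega>)^2 + b * (Y \<omega> + X \<omega>)))
           \<le> expectation (\<lambda>\<omega>. exp (l * (Y \<omega>)^2 + b * Y \<omega>) * (1 + \<nu> * (exp (2 * l * Y \<omega> + l + b) - 1)))"
proof -
  define g where "g = (\<lambda>s. exp (l * s^2 + b * s))"
  define H where "H = (\<lambda>s. g s * (exp (2 * l * s + l + b) - 1))"
  have H_nonneg: "0 \<le> H (Y \<omega>)" if "\<omega> \<in> space M" for \<omega>
    using Y(2)[OF that] lb by (simp add: H_def g_def)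
  have cont_g: "continuous_on UNIV g" and cont_H: "continuous_on UNIV H"
    unfolding H_def g_def by (intro continuous_intros)+
  have int_X: "integrable M X"
    by (rule integrable_continuous_comp_bounded[where f="\<lambda>x. x" and K="{0..1}", simplified])
       (use X in auto)
  have int_g: "integrable M (\<lambda>\<omega>. g (Y \<omega>))" and int_H: "integrable M (\<lambda>\<omega>. H (Y \<omega>))"
    using cont_g cont_H Y by (auto intro: integrable_continuous_comp_bounded[where K="{0..K}"])
  have "indep_var borel (id \<circ> X) borel (H \<circ> Y)"
    by (intro indep_var_compose[OF indep] borel_measurable_continuous_onI cont_H) auto
  hence indep_H: "indep_var borel X borel (\<lambda>\<omega>. H (Y \<omega>))" by (simp add: comp_def)
  have int_XH: "integrable M (\<lambda>\<omega>. X \<omega> * H (Y \<omega>))"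
    by (rule indep_var_integrable[OF indep_H int_X int_H])
  have "expectation (\<lambda>\<omega>. exp (l * (Y \<omega> + X \<omega>)^2 + b * (Y \<omega> + X \<omega>)))
          \<le> expectation (\<lambda>\<omega>. g (Y \<omega>) + X \<omega> * H (Y \<omega>))"
  proof (rule integral_mono')
    show "integrable M (\<lambda>\<omega>. g (Y \<omega>) + X \<omega> * H (Y \<omega>))" using int_g int_XH by simp
    fix \<omega> assume \<omega>: "\<omega> \<in> space M"
    with X(2) exp_quadratic_shift_le[OF lb(1), of "X \<omega>" "Y \<omega>" b]
    show "exp (l * (Y \<omega> + X \<omega>)^2 + b * (Y \<omega> + X \<omega>)) \<le> g (Y \<omega>) + X \<omega> * H (Y \<omega>)"
      by (simp add: g_def H_def algebra_simps)
    show "0 \<le> g (Y \<omega>) + X \<omega> * H (Y \<omega>)"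
      using X(2)[OF \<omega>] H_nonneg[OF \<omega>] by (simp add: g_def add_nonneg_nonneg)
  qed
  also have "\<dots> \<le> expectation (\<lambda>\<omega>. g (Y \<omega>)) + \<nu> * expectation (\<lambda>\<omega>. H (Y \<omega>))"
    using expectation_indep_mult_le[OF indep_H int_X int_H EX] H_nonneg int_g int_XH by simp
  also have "\<dots> = expectation (\<lambda>\<omega>. g (Y \<omega>) + \<nu> * H (Y \<omega>))"
    using int_g int_H by simp
  finally show ?thesis by (simp add: g_def H_def algebra_simps)
qed

lemma (in prob_space) expectation_exp_quadratic_step:
  fixes X Y :: "'a \<Rightarrow> real" and K \<nu> c l b :: real
  assumes "indep_var borel X borel Y"
    and "X \<in> borel_measurable M" "\<And>\<omega>. \<omega> \<in> space M \<Longrightarrow> X \<omega> \<in> {0..1}"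
    and "expectation X \<le> \<nu>"
    and Y: "Y \<in> borel_measurable M" "\<And>\<omega>. \<omega> \<in> space M \<Longrightarrow> Y \<omega> \<in> {0..K}"
    and \<nu>c: "0 \<le> \<nu>" "1 \<le> c" "c * \<nu> < 1" and lb: "0 \<le> l" "0 \<le> b"
    and small: "l * (2 * K + 1) + b \<le> ln c / (1 - c * \<nu>)"
  shows "expectation (\<lambda>\<omega>. exp (l * (Y \<omega> + X \<omega>)^2 + b * (Y \<omega> + X \<omega>)))
           \<le> expectation (\<lambda>\<omega>. exp (l * (Y \<omega>)^2 + (b + 2 * c * \<nu> * l) * Y \<omega>)) * exp (c * \<nu> * (l + b))"
proof -
  define g where "g = (\<lambda>s. exp (l * s^2 + b * s))"
  define T where "T = (\<lambda>s. 2 * l * s + l + b)"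
  have "expectation (\<lambda>\<omega>. exp (l * (Y \<omega> + X \<omega>)^2 + b * (Y \<omega> + X \<omega>)))
          \<le> expectation (\<lambda>\<omega>. g (Y \<omega>) * (1 + \<nu> * (exp (T (Y \<omega>)) - 1)))"
    using expectation_exp_quadratic_shift_le[OF assms(1-6) lb] by (simp add: g_def T_def)
  also have "\<dots> \<le> expectation (\<lambda>\<omega>. g (Y \<omega>) * exp (c * \<nu> * T (Y \<omega>)))"
  proof (rule integral_mono')
    have "continuous_on UNIV (\<lambda>s. g s * exp (c * \<nu> * T s))"
      unfolding g_def T_def by (intro continuous_intros)
    thus "integrable M (\<lambda>\<omega>. g (Y \<omega>) * exp (c * \<nu> * T (Y \<omega>)))"
      using Y by (intro integrable_continuous_comp_bounded[where K="{0..K}"]) auto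
    fix \<omega> assume "\<omega> \<in> space M"
    hence "0 \<le> Y \<omega>" "2 * l * Y \<omega> \<le> 2 * l * K" using Y(2) lb by (auto intro: mult_left_mono)
    hence "0 \<le> T (Y \<omega>)" "T (Y \<omega>) \<le> ln c / (1 - c * \<nu>)"
      using lb small by (auto simp: T_def algebra_simps)
    from bernoulli_mgf_le_exp_scaled[OF \<nu>c this]
    show "g (Y \<omega>) * (1 + \<nu> * (exp (T (Y \<omega>)) - 1)) \<le> g (Y \<omega>) * exp (c * \<nu> * T (Y \<omega>))"
      by (simp add: g_def)
    show "0 \<le> g (Y \<omega>) * exp (c * \<nu> * T (Y \<omega>))" by (simp add: g_def)
  qed
  also have "\<dots> = expectation (\<lambda>\<omega>. exp (l * (Y \<omega>)^2 + (b + 2 * c * \<nu> * l) * Y \<omega>)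
                                    * exp (c * \<nu> * (l + b)))"
    by (simp add: g_def T_def exp_add[symmetric] algebra_simps)
  also have "\<dots> = expectation (\<lambda>\<omega>. exp (l * (Y \<omega>)^2 + (b + 2 * c * \<nu> * l) * Y \<omega>))
                   * exp (c * \<nu> * (l + b))"
    by (rule integral_mult_left_zero)
  finally show ?thesis .
qed

theorem (in prob_space) expectation_exp_square_sum_le:
  fixes x :: "nat \<Rightarrow> 'a \<Rightarrow> real" and n :: nat and \<nu> c l :: real
  assumes indep: "indep_vars (\<lambda>_. borel) x {..<n}"
    and meas: "\<And>i. i < n \<Longrightarrow> x i \<in> borel_measurable M"
    and range: "\<And>i \<omega>. i < n \<Longrightarrow> \<omega> \<in> space M \<Longrightarrow> x i \<omega> \<in> {0..1}"
    and mean: "\<And>i. i < n \<Longrightarrow> expectation (x i) \<le> \<nu>"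
    and \<nu>c: "0 \<le> \<nu>" "1 \<le> c" "c * \<nu> < 1" and l: "0 \<le> l"
    and small: "l * (2 * real n - 1) \<le> ln c / (1 - c * \<nu>)"
  shows "expectation (\<lambda>\<omega>. exp (l * (\<Sum>i<n. x i \<omega>)^2))
           \<le> exp (c * \<nu> * l * real n * (1 + c * \<nu> * (real n - 1)))"
proof -
  define q where "q = c * \<nu>"
  have q: "0 \<le> q" "q < 1" using \<nu>c by (auto simp: q_def)
  define S where "S = (\<lambda>k \<omega>. \<Sum>i<k. x i \<omega>)"
  define Q where "Q = (\<lambda>k. expectation (\<lambda>\<omega>. exp (l * (S k \<omega>)^2 + 2 * q * l * (real n - real k) * S k \<omega>)))"
  define E where "E = (\<lambda>k. q * l * real k * (1 + q * (2 * real n - real k - 1)))"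
  have step: "Q (Suc k) \<le> Q k * exp (E (Suc k) - E k)" if k: "k < n" for k
  proof -
    define b where "b = 2 * q * l * (real n - real (Suc k))"
    have "indep_var borel (x k) borel (S k)"
      unfolding S_def using k by (intro indep_vars_sum indep_vars_subset[OF indep]) auto
    moreover have "S k \<omega> \<in> {0..real k}" if "\<omega> \<in> space M" for \<omega>
      using sum_bounded_above[of "{..<k}" "\<lambda>i. x i \<omega>" 1] range k that
      by (auto simp: S_def intro!: sum_nonneg)
    moreover have "b \<le> 2 * l * (real n - real (Suc k))"
      using mult_left_le_one_le[of "2 * l * (real n - real (Suc k))" q] q k l
      by (simp add: b_def mult.assoc)
    hence "l * (2 * real k + 1) + b \<le> ln c / (1 - c * \<nu>)"
      using small by (simp add: algebra_simps)
    ultimately have "expectation (\<lambda>\<omega>. exp (l * (S k \<omega> + x k \<omega>)^2 + b * (S k \<omega> + x k \<omega>)))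
        \<le> expectation (\<lambda>\<omega>. exp (l * (S k \<omega>)^2 + (b + 2 * c * \<nu> * l) * S k \<omega>)) * exp (c * \<nu> * (l + b))"
      using meas range mean \<nu>c l k q
      by (intro expectation_exp_quadratic_step[where K="real k"]) (auto simp: S_def b_def q_def)
    moreover have "b + 2 * c * \<nu> * l = 2 * q * l * (real n - real k)"
      and "c * \<nu> * (l + b) = E (Suc k) - E k"
      by (simp_all add: b_def q_def E_def algebra_simps)
    ultimately show ?thesis by (simp add: Q_def S_def b_def)
  qed
  have "Q 0 \<le> exp (E 0)" by (simp add: Q_def E_def S_def prob_space)
  hence "Q n \<le> exp (E n)" using step by (rule le_exp_of_increments)
  thus ?thesis by (simp add: Q_def S_def E_def q_def algebra_simps)
qed

theorem lemma4:
  fixes M :: "'a measure" and x :: "nat \<Rightarrow> 'a \<Rightarrow> real"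
    and n :: nat and \<nu> c l :: real
  assumes "prob_space M"
    and "prob_space.indep_vars M (\<lambda>_. borel) x {..<n}"
    and "\<And>i. i < n \<Longrightarrow> x i \<in> borel_measurable M"
    and "\<And>i \<omega>. i < n \<Longrightarrow> \<omega> \<in> space M \<Longrightarrow> 0 \<le> x i \<omega> \<and> x i \<omega> \<le> 1"
    and "\<And>i. i < n \<Longrightarrow> prob_space.expectation M (x i) \<le> \<nu>"
    and "0 \<le> \<nu>" and "\<nu> \<le> 1"
    and "1 \<le> c" and "c * \<nu> < 1"
    and "0 \<le> l" and "l \<le> ln c / ((1 - c * \<nu>) * (4 * real n - 3))"
  shows "prob_space.expectation M (\<lambda>\<omega>. exp (l * (\<Sum>i<n. x i \<omega>)^2))
           \<le> exp (l * c * real n * \<nu> * (1 + c * real n * \<nu>))"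
proof -
  interpret prob_space M by fact
  have "l * (2 * real n - 1) \<le> ln c / (1 - c * \<nu>)"
  proof (cases "n = 0")
    case True
    have "0 \<le> ln c / (1 - c * \<nu>)" using assms(8,9) by simp
    thus ?thesis using True assms(10) by simp
  next
    case False
    have "l * (4 * real n - 3) * (1 - c * \<nu>) \<le> ln c"
      using assms(9,11) False by (simp add: pos_le_divide_eq mult_ac)
    hence "l * (4 * real n - 3) \<le> ln c / (1 - c * \<nu>)"
      using assms(9) by (simp add: pos_le_divide_eq)
    moreover have "l * (2 * real n - 1) \<le> l * (4 * real n - 3)"
      using False assms(10) by (intro mult_left_mono) auto
    ultimately show ?thesis by linarith
  qed
  with assms have "expectation (\<lambda>\<omega>. exp (l * (\<Sum>i<n. x i \<omega>)^2))
      \<le> exp (c * \<nu> * l * real n * (1 + c * \<nu> * (real n - 1)))"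
    by (intro expectation_exp_square_sum_le) auto
  also have "\<dots> \<le> exp (l * c * real n * \<nu> * (1 + c * real n * \<nu>))"
    using assms(6,8,10) by (simp add: algebra_simps)
  finally show ?thesis .
qed

end
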